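(* Consider the linear content-access game described in the context, with $\tau>0$, $\pi_G\in[0,1]$, $\pi_B=1-\pi_G$, $\lambda_{ps}(G)\ge\lambda_{ps}(B)>0$ and $\lambda_{pu}>0$. Then: (i) if $\frac{\pi_G}{\lambda_{ps}(G)} \geq \frac{\pi_B}{\lambda_{ps}(B)}$, then $\alpha=0$ is a symmetric Wardrop equilibrium; (ii) if $\frac{\pi_G}{\lambda_{ps}(G)} \leq \frac{\pi_B}{\lambda_{ps}(B)}$ and $\frac{\pi_G}{\lambda_{ps}(G)+\lambda_{pu}} \geq \frac{\pi_B}{\lambda_{ps}(B)+\lambda_{pu}}$, then every threshold $\alpha$ with $0\le\alpha\le\beta_{\tau,B}$ is a symmetric Wardrop equilibrium; (iii) if $\frac{\pi_G}{\lambda_{ps}(G)} \leq \frac{\pi_B}{\lambda_{ps}(B)}$ and $\frac{\pi_G}{\lambda_{ps}(G)+\lambda_{pu}} < \frac{\pi_B}{\lambda_{ps}(B)+\lambda_{pu}}$, then the threshold $\alpha=\beta_{\tau,B}$ (i.e. $\alpha$ with $\alpha=\beta_{\tau,B}$ when all others play $\alpha$) is a symmetric Wardrop equilibrium.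
   Context: A content has a type $\theta\in\{G,B\}$ (good/bad) and lifetime $\tau>0$. Users hold beliefs $\pi_G$ that the content is good and $\pi_B=1-\pi_G$ that it is bad. Each (pull) user uses a threshold strategy: access the content once its viewcount reaches a threshold. All users other than a tagged user use a common threshold $\alpha\ge 0$; the tagged user uses $\beta\ge0$ (a single user's deviation does not affect the viewcount). Linear dynamics: for type $\theta$, with push rate $\lambda_{ps}(\theta)>0$ and type-independent pull rate $\lambda_{pu}>0$, let $t_\alpha(\theta)=\alpha/\lambda_{ps}(\theta)$ and $X(t,\theta)=\lambda_{ps}(\theta)\,t+\lambda_{pu}\,(t-t_\alpha(\theta))^+$ for $t\ge0$. For $\beta\ge0$, $t_\beta(\theta)=\min\{t\ge 0: X(t,\theta)=\beta\}$. Let $\beta_{\tau,B}=X(\tau,B)$ (the value with $t_{\beta_{\tau,B}}(B)=\tau$; it depends on $\alpha$). The tagged user's utility is $U(\alpha,\beta)=\pi_G(\tau-t_\beta(G))-\pi_B(\tau-t_\beta(B))$ for $0\le\beta\le\beta_{\tau,B}$; a best response to $\alpha$ is a maximizer of $U(\alpha,\cdot)$ over $[0,\beta_{\tau,B}]$. A threshold $\alpha$ with $0\le\alpha\le\beta_{\tau,B}$ is a symmetric Wardrop equilibrium if $\beta=\alpha$ is a best response to $\alpha$. *)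

theory Defs
  imports Complex_Main
begin

datatype ctype = G | B

text \<open>Viewcount of content of type th at time t when other users use threshold alpha;
  lps = push rate (type dependent), lpu = pull rate.\<close>
definition viewcount :: "(ctype \<Rightarrow> real) \<Rightarrow> real \<Rightarrow> real \<Rightarrow> ctype \<Rightarrow> real \<Rightarrow> real" where
  "viewcount lps lpu alpha th t = lps th * t + lpu * max 0 (t - alpha / lps th)"

definition t_beta :: "(ctype \<Rightarrow> real) \<Rightarrow> real \<Rightarrow> real \<Rightarrow> real \<Rightarrow> ctype \<Rightarrow> real" where
  "t_beta lps lpu alpha beta th = (LEAST t. t \<ge> 0 \<and> viewcount lps lpu alpha th t = beta)"

definition beta_tau_B :: "(ctype \<Rightarrow> real) \<Rightarrow> real \<Rightarrow> real \<Rightarrow> real \<Rightarrow> real" where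
  "beta_tau_B lps lpu tau alpha = viewcount lps lpu alpha B tau"

definition utility :: "(ctype \<Rightarrow> real) \<Rightarrow> real \<Rightarrow> real \<Rightarrow> real \<Rightarrow> real \<Rightarrow> real \<Rightarrow> real" where
  "utility lps lpu tau piG alpha beta =
     piG * (tau - t_beta lps lpu alpha beta G) - (1 - piG) * (tau - t_beta lps lpu alpha beta B)"

definition best_response :: "(ctype \<Rightarrow> real) \<Rightarrow> real \<Rightarrow> real \<Rightarrow> real \<Rightarrow> real \<Rightarrow> real \<Rightarrow> bool" where
  "best_response lps lpu tau piG alpha beta \<longleftrightarrow>
     0 \<le> beta \<and> beta \<le> beta_tau_B lps lpu tau alpha \<and>
     (\<forall>b. 0 \<le> b \<and> b \<le> beta_tau_B lps lpu tau alpha \<longrightarrow>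
          utility lps lpu tau piG alpha b \<le> utility lps lpu tau piG alpha beta)"

definition symmetric_wardrop :: "(ctype \<Rightarrow> real) \<Rightarrow> real \<Rightarrow> real \<Rightarrow> real \<Rightarrow> real \<Rightarrow> bool" where
  "symmetric_wardrop lps lpu tau piG alpha \<longleftrightarrow>
     0 \<le> alpha \<and> alpha \<le> beta_tau_B lps lpu tau alpha \<and>
     best_response lps lpu tau piG alpha alpha"

end

theory Submission
  imports Defs
begin

text \<open>The hitting time \<open>t_\<beta>\<close> is piecewise linear in \<open>\<beta>\<close>: with slope \<open>1/\<lambda>\<^sub>p\<^sub>s\<close> below the
  common threshold \<open>\<alpha>\<close> and slope \<open>1/(\<lambda>\<^sub>p\<^sub>s+\<lambda>\<^sub>p\<^sub>u)\<close> above it. So deviating from \<open>\<alpha>\<close> changes the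
  tagged user's utility by \<open>(\<alpha>-\<beta>)(\<pi>\<^sub>G/\<lambda>\<^sub>p\<^sub>s(G) - \<pi>\<^sub>B/\<lambda>\<^sub>p\<^sub>s(B))\<close> downwards and by
  \<open>(\<beta>-\<alpha>)(\<pi>\<^sub>G/(\<lambda>\<^sub>p\<^sub>s(G)+\<lambda>\<^sub>p\<^sub>u) - \<pi>\<^sub>B/(\<lambda>\<^sub>p\<^sub>s(B)+\<lambda>\<^sub>p\<^sub>u))\<close> upwards, and each case of the theorem
  is a sign condition on these two ratio differences. In case (i) the upward condition is implied
  by the downward one because \<open>\<lambda>\<^sub>p\<^sub>s(G) \<ge> \<lambda>\<^sub>p\<^sub>s(B)\<close>; in case (iii) no upward deviation is possible
  since \<open>\<alpha> = \<beta>\<^sub>\<tau>\<^sub>,\<^sub>B\<close>.\<close>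

lemma strict_mono_viewcount:
  assumes "lps th > 0" and "lpu \<ge> 0"
  shows "strict_mono (viewcount lps lpu alpha th)"
proof (rule strict_monoI)
  fix s t :: real
  assume "s < t"
  then have "lps th * s < lps th * t"
    using assms(1) by simp
  moreover have "lpu * max 0 (s - alpha / lps th) \<le> lpu * max 0 (t - alpha / lps th)"
    using \<open>s < t\<close> assms(2) by (intro mult_left_mono) auto
  ultimately show "viewcount lps lpu alpha th s < viewcount lps lpu alpha th t"
    unfolding viewcount_def by (rule add_less_le_mono)
qed

lemma t_beta_eq:
  assumes a: "lps th > 0" and c: "lpu \<ge> 0" and "alpha \<ge> 0" and "beta \<ge> 0"
  shows "t_beta lps lpu alpha beta th =
    (if beta \<le> alpha then beta / lps th else alpha / lps th + (beta - alpha) / (lps th + lpu))"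
    (is "_ = ?T")
proof -
  have T_nonneg: "?T \<ge> 0"
    using assms by auto
  have "viewcount lps lpu alpha th ?T = beta"
  proof (cases "beta \<le> alpha")
    case True
    then have "beta / lps th - alpha / lps th \<le> 0"
      using a by (simp add: diff_divide_distrib[symmetric] divide_nonpos_pos)
    then show ?thesis
      using True a by (simp add: viewcount_def)
  next
    case False
    have "lps th + lpu > 0"
      using a c by simp
    define d where "d = (beta - alpha) / (lps th + lpu)"
    have "?T = alpha / lps th + d"
      using False by (simp add: d_def)
    then have "lps th * ?T + lpu * d = alpha + (lps th + lpu) * d"
      using a by (simp add: ring_distribs)
    also have "\<dots> = beta"
      using \<open>lps th + lpu > 0\<close> by (simp add: d_def)
    finally have "lps th * ?T + lpu * ((beta - alpha) / (lps th + lpu)) = beta"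
      by (simp add: d_def)
    moreover have "?T - alpha / lps th = (beta - alpha) / (lps th + lpu)"
      using False by simp
    ultimately show ?thesis
      using False c \<open>lps th + lpu > 0\<close> by (simp add: viewcount_def)
  qed
  then show ?thesis
    unfolding t_beta_def using T_nonneg strict_mono_eq[OF strict_mono_viewcount[of lps th lpu alpha, OF a c]]
    by (intro Least_equality) auto
qed

lemma t_beta_self:
  assumes "lps th > 0" and "lpu \<ge> 0" and "alpha \<ge> 0"
  shows "t_beta lps lpu alpha alpha th = alpha / lps th"
  using t_beta_eq[of lps th lpu alpha alpha] assms by simp

lemma utility_diff_below:
  assumes "lps G > 0" and "lps B > 0" and "lpu \<ge> 0" and "0 \<le> b" and "b \<le> alpha"
  shows "utility lps lpu tau piG alpha b - utility lps lpu tau piG alpha alpha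
    = (alpha - b) * (piG / lps G - (1 - piG) / lps B)"
  using assms t_beta_eq[of lps G lpu alpha b] t_beta_eq[of lps B lpu alpha b]
    t_beta_self[of lps G lpu alpha] t_beta_self[of lps B lpu alpha]
  by (simp add: utility_def algebra_simps diff_divide_distrib)

lemma utility_diff_above:
  assumes "lps G > 0" and "lps B > 0" and "lpu \<ge> 0" and "0 \<le> alpha" and "alpha \<le> b"
  shows "utility lps lpu tau piG alpha b - utility lps lpu tau piG alpha alpha
    = (b - alpha) * ((1 - piG) / (lps B + lpu) - piG / (lps G + lpu))"
proof (cases "b = alpha")
  case False
  with assms show ?thesis
    using t_beta_eq[of lps G lpu alpha b] t_beta_eq[of lps B lpu alpha b]
      t_beta_self[of lps G lpu alpha] t_beta_self[of lps B lpu alpha]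
    by (simp add: utility_def algebra_simps)
qed simp

lemma utility_le_self_below:
  assumes "lps G > 0" and "lps B > 0" and "lpu \<ge> 0" and "0 \<le> b" and "b \<le> alpha"
    and "piG / lps G \<le> (1 - piG) / lps B"
  shows "utility lps lpu tau piG alpha b \<le> utility lps lpu tau piG alpha alpha"
proof -
  have "(alpha - b) * (piG / lps G - (1 - piG) / lps B) \<le> 0"
    using assms(5,6) by (intro mult_nonneg_nonpos) auto
  then show ?thesis
    using utility_diff_below[OF assms(1-5), of tau piG] by simp
qed

lemma utility_le_self_above:
  assumes "lps G > 0" and "lps B > 0" and "lpu \<ge> 0" and "0 \<le> alpha" and "alpha \<le> b"
    and "(1 - piG) / (lps B + lpu) \<le> piG / (lps G + lpu)"
  shows "utility lps lpu tau piG alpha b \<le> utility lps lpu tau piG alpha alpha"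
proof -
  have "(b - alpha) * ((1 - piG) / (lps B + lpu) - piG / (lps G + lpu)) \<le> 0"
    using assms(5,6) by (intro mult_nonneg_nonpos) auto
  then show ?thesis
    using utility_diff_above[OF assms(1-5), of tau piG] by simp
qed

lemma divide_le_divide_add:
  fixes p q a b c :: real
  assumes "0 < b" and "b \<le> a" and "0 \<le> q" and "0 \<le> c" and "q / b \<le> p / a"
  shows "q / (b + c) \<le> p / (a + c)"
proof -
  have "q * a \<le> p * b"
    using assms(1,2,5) by (simp add: divide_simps)
  moreover have "q * b \<le> q * a"
    using assms(2,3) by (simp add: mult_left_mono)
  ultimately have "q \<le> p"
    using assms(1) mult_le_cancel_right_pos[of b q p] by linarith
  then have "q * c \<le> p * c"
    using assms(4) by (rule mult_right_mono)
  then have "q * (a + c) \<le> p * (b + c)"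
    using \<open>q * a \<le> p * b\<close> by (simp add: distrib_left)
  then show ?thesis
    using assms(1,2,4) by (simp add: divide_simps)
qed

lemma beta_tau_B_ge:
  assumes "lpu \<ge> 0"
  shows "beta_tau_B lps lpu tau alpha \<ge> lps B * tau"
  using assms by (simp add: beta_tau_B_def viewcount_def)

lemma beta_tau_B_fixed_point:
  assumes "lps B > 0"
  shows "beta_tau_B lps lpu tau (lps B * tau) = lps B * tau"
  using assms by (simp add: beta_tau_B_def viewcount_def)

theorem theorem1:
  fixes lps :: "ctype \<Rightarrow> real" and lpu tau piG :: real
  assumes "tau > 0" and "0 \<le> piG" and "piG \<le> 1"
    and "lps G \<ge> lps B" and "lps B > 0" and "lpu > 0"
  shows "(piG / lps G \<ge> (1 - piG) / lps B \<longrightarrow> symmetric_wardrop lps lpu tau piG 0)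
    \<and> (piG / lps G \<le> (1 - piG) / lps B \<and> piG / (lps G + lpu) \<ge> (1 - piG) / (lps B + lpu) \<longrightarrow>
         (\<forall>alpha. 0 \<le> alpha \<and> alpha \<le> beta_tau_B lps lpu tau alpha \<longrightarrow>
            symmetric_wardrop lps lpu tau piG alpha))
    \<and> (piG / lps G \<le> (1 - piG) / lps B \<and> piG / (lps G + lpu) < (1 - piG) / (lps B + lpu) \<longrightarrow>
         (\<exists>alpha. alpha = beta_tau_B lps lpu tau alpha) \<and>
         (\<forall>alpha. alpha = beta_tau_B lps lpu tau alpha \<longrightarrow> symmetric_wardrop lps lpu tau piG alpha))"
proof -
  have G: "lps G > 0" and B: "lps B > 0" and pu: "lpu \<ge> 0"
    using assms(4-6) by auto
  have bound: "beta_tau_B lps lpu tau alpha \<ge> 0" for alpha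
    using beta_tau_B_ge[OF pu, of lps tau alpha] mult_pos_pos[OF B assms(1)] by linarith
  note below = utility_le_self_below[OF G B pu] and above = utility_le_self_above[OF G B pu]
  have i: "symmetric_wardrop lps lpu tau piG 0" if "(1 - piG) / lps B \<le> piG / lps G"
  proof -
    have "(1 - piG) / (lps B + lpu) \<le> piG / (lps G + lpu)"
      using divide_le_divide_add[OF B assms(4) _ pu that] assms(3) by simp
    then show ?thesis
      using bound by (auto simp: symmetric_wardrop_def best_response_def intro: above)
  qed
  have ii: "symmetric_wardrop lps lpu tau piG alpha"
    if "piG / lps G \<le> (1 - piG) / lps B" and "(1 - piG) / (lps B + lpu) \<le> piG / (lps G + lpu)"
      and "0 \<le> alpha" and "alpha \<le> beta_tau_B lps lpu tau alpha" for alpha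
    using that unfolding symmetric_wardrop_def best_response_def
    by (meson below above linear)
  have iii: "symmetric_wardrop lps lpu tau piG alpha"
    if "piG / lps G \<le> (1 - piG) / lps B" and "alpha = beta_tau_B lps lpu tau alpha" for alpha
    using that bound[of alpha] unfolding symmetric_wardrop_def best_response_def
    by (metis below order_refl)
  show ?thesis
    using i ii iii beta_tau_B_fixed_point[of lps lpu tau] B by (metis less_le)
qed

end
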